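(* Let $\mathcal{B}$ be a real Banach space, $\mathcal{P}$ a cone over $\mathcal{B}$ with induced partial order $\preceq$, let $\mathcal{Q}$ be a real vector space and $d$ a quasi-cone metric on $\mathcal{Q}$ with values in $\mathcal{B}$. Let $H$ be a non-empty subset of $\mathcal{Q}$. Then $H$ is a backward pseudo Chebyshev subset of $\mathcal{Q}$ if and only if there do not exist $q\in\mathcal{Q}$, infinitely many linearly independent elements $\{h_n\}_{n\in\mathbb{N}}\subseteq H$, and a function $f:\mathcal{Q}\to\mathcal{B}$ such that for all $n\in\mathbb{N}$: $f(h_n)=d(h_n,q)$, $\{f(h)-f(h_n): h\in H\}\subseteq\mathcal{P}$, and $\{d(h,q)-f(h): h\in H\}\subseteq\mathcal{P}$.
   Context: A cone over a real Banach space $\mathcal{B}$ is a subset $\mathcal{P}\subseteq\mathcal{B}$ that is closed, $\mathcal{P}\neq\{0_\mathcal{B}\}$, satisfies $ax+by\in\mathcal{P}$ for all $x,y\in\mathcal{P}$ and $a,b\geq 0$, and such that $x\in\mathcal{P}$ and $-x\in\mathcal{P}$ imply $x=0_\mathcal{B}$. For $r,s\in\mathcal{B}$, $s\preceq r$ means $r-s\in\mathcal{P}$. A quasi-cone metric on a set $\mathcal{Q}$ is a map $d:\mathcal{Q}\times\mathcal{Q}\to\mathcal{B}$ such that for all $r,s,t\in\mathcal{Q}$: $d(r,s)\succeq 0_\mathcal{B}$; $d(r,s)=0_\mathcal{B}$ iff $r=s$; $d(r,t)\preceq d(r,s)+d(s,t)$. For non-empty $H\subseteq\mathcal{Q}$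 and $q\in\mathcal{Q}$, $\mathcal{P}_{H_b}(q)$ is the set of all $h_b\in H$ with $d(h_b,q)\preceq d(h,q)$ for all $h\in H$. A non-empty $H\subseteq\mathcal{Q}$ is a backward pseudo Chebyshev subset of $\mathcal{Q}$ if for every $q\in\mathcal{Q}$ the set $\mathcal{P}_{H_b}(q)$ does not contain infinitely many linearly independent elements. *)

theory Defs
  imports "HOL-Analysis.Analysis"
begin

definition is_cone :: "'b::banach set \<Rightarrow> bool" where
  "is_cone P \<longleftrightarrow> closed P \<and> P \<noteq> {0} \<and>
     (\<forall>x\<in>P. \<forall>y\<in>P. \<forall>a::real. \<forall>b::real. a \<ge> 0 \<and> b \<ge> 0 \<longrightarrow> a *\<^sub>R x + b *\<^sub>R y \<in> P) \<and>
     (\<forall>x. x \<in> P \<and> - x \<in> P \<longrightarrow> x = 0)"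

definition cone_le :: "'b::banach set \<Rightarrow> 'b \<Rightarrow> 'b \<Rightarrow> bool" where
  "cone_le P s r \<longleftrightarrow> r - s \<in> P"

definition quasi_cone_metric :: "'b::banach set \<Rightarrow> ('q \<Rightarrow> 'q \<Rightarrow> 'b) \<Rightarrow> bool" where
  "quasi_cone_metric P d \<longleftrightarrow>
     (\<forall>r s. cone_le P 0 (d r s)) \<and>
     (\<forall>r s. d r s = 0 \<longleftrightarrow> r = s) \<and>
     (\<forall>r s t. cone_le P (d r t) (d r s + d s t))"

definition backward_best_approx ::
  "'b::banach set \<Rightarrow> ('q \<Rightarrow> 'q \<Rightarrow> 'b) \<Rightarrow> 'q set \<Rightarrow> 'q \<Rightarrow> 'q set" where
  "backward_best_approx P d H q = {hb \<in> H. \<forall>h\<in>H. cone_le P (d hb q) (d h q)}"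

definition backward_pseudo_chebyshev ::
  "'b::banach set \<Rightarrow> ('q::real_vector \<Rightarrow> 'q \<Rightarrow> 'b) \<Rightarrow> 'q set \<Rightarrow> bool" where
  "backward_pseudo_chebyshev P d H \<longleftrightarrow> H \<noteq> {} \<and>
     (\<forall>q. \<not> (\<exists>S. S \<subseteq> backward_best_approx P d H q \<and> infinite S \<and> independent S))"

end

theory Submission
  imports Defs
begin

text \<open>If a function \<open>f\<close> lies below \<open>d(\<cdot>, q)\<close> on \<open>H\<close>, touches it at \<open>h\<^sub>0\<close> and attains its
  minimum over \<open>H\<close> there, then \<open>d(h\<^sub>0, q) = f(h\<^sub>0) \<preceq> f(h) \<preceq> d(h, q)\<close>, so \<open>h\<^sub>0\<close> is a backward
  best approximation of \<open>q\<close>. Conversely all backward best approximations of \<open>q\<close> have the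
  same distance to \<open>q\<close> by antisymmetry of the cone, so this common distance is a constant
  \<open>f\<close> that serves all of them at once.\<close>

definition touching_minorant ::
  "'b::banach set \<Rightarrow> ('q \<Rightarrow> 'q \<Rightarrow> 'b) \<Rightarrow> 'q set \<Rightarrow> 'q \<Rightarrow> ('q \<Rightarrow> 'b) \<Rightarrow> 'q \<Rightarrow> bool" where
  "touching_minorant P d H q f h\<^sub>0 \<longleftrightarrow>
     f h\<^sub>0 = d h\<^sub>0 q \<and> {f h - f h\<^sub>0 | h. h \<in> H} \<subseteq> P \<and> {d h q - f h | h. h \<in> H} \<subseteq> P"

lemma cone_add:
  assumes "is_cone P" "x \<in> P" "y \<in> P"
  shows "x + y \<in> P"
  using assms unfolding is_cone_def by (metis scaleR_one zero_le_one)

lemma cone_antisym: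
  assumes "is_cone P" "x - y \<in> P" "y - x \<in> P"
  shows "x = y"
  using assms unfolding is_cone_def by (metis eq_iff_diff_eq_0 minus_diff_eq)

lemma touching_minorant_imp_backward_best_approx:
  assumes "is_cone P" "h\<^sub>0 \<in> H" "touching_minorant P d H q f h\<^sub>0"
  shows "h\<^sub>0 \<in> backward_best_approx P d H q"
proof -
  have "d h q - d h\<^sub>0 q \<in> P" if "h \<in> H" for h
  proof -
    have "(d h q - f h) + (f h - f h\<^sub>0) \<in> P"
      using assms that unfolding touching_minorant_def by (blast intro: cone_add)
    then show ?thesis
      using assms(3) unfolding touching_minorant_def by simp
  qed
  then show ?thesis
    using assms(2) unfolding backward_best_approx_def cone_le_def by blast
qed

lemma backward_best_approx_touching_minorant:
  assumes "is_cone P" "h\<^sub>0 \<in> backward_best_approx P d H q" "h \<in> backward_best_approx P d H q"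
  shows "touching_minorant P d H q (\<lambda>_. d h\<^sub>0 q) h"
proof -
  have "d h q = d h\<^sub>0 q"
    using assms unfolding backward_best_approx_def cone_le_def by (blast intro: cone_antisym)
  moreover have "0 \<in> P"
    using assms(2) unfolding backward_best_approx_def cone_le_def by force
  ultimately show ?thesis
    using assms(2) unfolding touching_minorant_def backward_best_approx_def cone_le_def by auto
qed

lemma infinite_independent_imp_independent_sequence:
  fixes S :: "'a::real_vector set"
  assumes "infinite S" "independent S"
  obtains hs :: "nat \<Rightarrow> 'a" where "inj hs" "range hs \<subseteq> S" "independent (range hs)"
  using infinite_countable_subset[OF assms(1)] independent_mono[OF assms(2)] by blast

lemma infinite_independent_backward_best_approx_iff:
  fixes d :: "'q::real_vector \<Rightarrow> 'q \<Rightarrow> 'b::banach"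
  assumes "is_cone P"
  shows "(\<exists>S. S \<subseteq> backward_best_approx P d H q \<and> infinite S \<and> independent S) \<longleftrightarrow>
    (\<exists>hs :: nat \<Rightarrow> 'q. \<exists>f. inj hs \<and> range hs \<subseteq> H \<and> independent (range hs) \<and>
       (\<forall>n. touching_minorant P d H q f (hs n)))"
proof
  assume "\<exists>S. S \<subseteq> backward_best_approx P d H q \<and> infinite S \<and> independent S"
  then obtain hs :: "nat \<Rightarrow> 'q" where hs: "inj hs" "independent (range hs)"
      and best: "range hs \<subseteq> backward_best_approx P d H q"
    by (metis infinite_independent_imp_independent_sequence order_trans)
  have "\<forall>n. touching_minorant P d H q (\<lambda>_. d (hs 0) q) (hs n)"
    using best by (blast intro: backward_best_approx_touching_minorant[OF assms])
  moreover have "range hs \<subseteq> H"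
    using best unfolding backward_best_approx_def by blast
  ultimately show "\<exists>hs :: nat \<Rightarrow> 'q. \<exists>f. inj hs \<and> range hs \<subseteq> H \<and> independent (range hs) \<and>
       (\<forall>n. touching_minorant P d H q f (hs n))"
    using hs by blast
next
  assume "\<exists>hs :: nat \<Rightarrow> 'q. \<exists>f. inj hs \<and> range hs \<subseteq> H \<and> independent (range hs) \<and>
       (\<forall>n. touching_minorant P d H q f (hs n))"
  then obtain hs :: "nat \<Rightarrow> 'q" and f where hs: "inj hs" "range hs \<subseteq> H" "independent (range hs)"
      and touching: "\<forall>n. touching_minorant P d H q f (hs n)"
    by blast
  have "range hs \<subseteq> backward_best_approx P d H q"
    using hs(2) touching by (blast intro: touching_minorant_imp_backward_best_approx[OF assms])
  moreover have "infinite (range hs)"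
    using hs(1) by (simp add: range_inj_infinite)
  ultimately show "\<exists>S. S \<subseteq> backward_best_approx P d H q \<and> infinite S \<and> independent S"
    using hs(3) by blast
qed

theorem theorem8:
  fixes P :: "'b::banach set"
    and d :: "'q::real_vector \<Rightarrow> 'q \<Rightarrow> 'b"
    and H :: "'q set"
  assumes "is_cone P"
    and "quasi_cone_metric P d"
    and "H \<noteq> {}"
  shows "backward_pseudo_chebyshev P d H \<longleftrightarrow>
    \<not> (\<exists>q. \<exists>hs :: nat \<Rightarrow> 'q. \<exists>f :: 'q \<Rightarrow> 'b.
          inj hs \<and> range hs \<subseteq> H \<and> independent (range hs) \<and>
          (\<forall>n. f (hs n) = d (hs n) q \<and>
               {f h - f (hs n) | h. h \<in> H} \<subseteq> P \<and>
               {d h q - f h | h. h \<in> H} \<subseteq> P))"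
  using assms(3)
  unfolding backward_pseudo_chebyshev_def infinite_independent_backward_best_approx_iff[OF assms(1)]
    touching_minorant_def
  by simp

end
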